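(* Let $R$ be a commutative ring and consider morphisms $(f_t,f_h)\colon(L_t,L_h;\lambda_a,\lambda_b)\to(M_t,M_h;\mu_a,\mu_b)$ and $(g_t,g_h)\colon(M_t,M_h;\mu_a,\mu_b)\to(N_t,N_h;\eta_a,\eta_b)$ in $\mathrm{Rep}_R(\varkappa)$ with zero composite, such that the sequences $L_t\xrightarrow{f_t}M_t\xrightarrow{g_t}N_t$ and $L_h\xrightarrow{f_h}M_h\xrightarrow{g_h}N_h$ are exact at the middle term, and such that $f_h$ is injective. If $(L_t,L_h;\lambda_a,\lambda_b)$ and $(N_t,N_h;\eta_a,\eta_b)$ lie in $\mathrm{Rel}_R(\varkappa)$, then so does $(M_t,M_h;\mu_a,\mu_b)$.
   Context: $\mathrm{Rep}_R(\varkappa)$ has objects $(M_t,M_h;\mu_a,\mu_b)$ with $M_t,M_h$ $R$-modules and $\mu_a,\mu_b\in\mathrm{Hom}_R(M_t,M_h)$; morphisms are pairs $(f_t,f_h)$ of $R$-linear maps with $f_h\lambda_c=\mu_cf_t$ for $c=a,b$, composed componentwise. $\mathrm{Rel}_R(\varkappa)$ is the full subcategory of objects with $\ker(\mu_a)\cap\ker(\mu_b)=0$. *)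

theory Defs
  imports "HOL.Modules"
begin

definition rep_obj ::
  "('r::comm_ring_1 \<Rightarrow> 't::ab_group_add \<Rightarrow> 't) \<Rightarrow> ('r \<Rightarrow> 'h::ab_group_add \<Rightarrow> 'h)
   \<Rightarrow> ('t \<Rightarrow> 'h) \<Rightarrow> ('t \<Rightarrow> 'h) \<Rightarrow> bool" where
  "rep_obj st sh mua mub \<longleftrightarrow>
     module st \<and> module sh \<and> module_hom st sh mua \<and> module_hom st sh mub"

definition rep_mor ::
  "('r::comm_ring_1 \<Rightarrow> 'lt::ab_group_add \<Rightarrow> 'lt) \<Rightarrow> ('r \<Rightarrow> 'lh::ab_group_add \<Rightarrow> 'lh)
   \<Rightarrow> ('lt \<Rightarrow> 'lh) \<Rightarrow> ('lt \<Rightarrow> 'lh)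
   \<Rightarrow> ('r \<Rightarrow> 'mt::ab_group_add \<Rightarrow> 'mt) \<Rightarrow> ('r \<Rightarrow> 'mh::ab_group_add \<Rightarrow> 'mh)
   \<Rightarrow> ('mt \<Rightarrow> 'mh) \<Rightarrow> ('mt \<Rightarrow> 'mh)
   \<Rightarrow> ('lt \<Rightarrow> 'mt) \<Rightarrow> ('lh \<Rightarrow> 'mh) \<Rightarrow> bool" where
  "rep_mor slt slh la lb smt smh ma mb ft fh \<longleftrightarrow>
     module_hom slt smt ft \<and> module_hom slh smh fh \<and>
     fh \<circ> la = ma \<circ> ft \<and> fh \<circ> lb = mb \<circ> ft"

definition in_Rel :: "('t::zero \<Rightarrow> 'h::zero) \<Rightarrow> ('t \<Rightarrow> 'h) \<Rightarrow> bool" where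
  "in_Rel mua mub \<longleftrightarrow> {x. mua x = 0} \<inter> {x. mub x = 0} = {0}"

definition exact_at :: "('a \<Rightarrow> 'b::zero) \<Rightarrow> ('b \<Rightarrow> 'c::zero) \<Rightarrow> bool" where
  "exact_at f g \<longleftrightarrow> range f = {y. g y = 0}"

end

theory Submission
  imports Defs
begin

text \<open>A diagram chase: if \<open>\<mu>\<^sub>a x = \<mu>\<^sub>b x = 0\<close>, then \<open>g\<^sub>t x\<close> lies in the
  common kernel of \<open>\<eta>\<^sub>a, \<eta>\<^sub>b\<close>, hence vanishes, so \<open>x = f\<^sub>t y\<close>; injectivity of \<open>f\<^sub>h\<close>
  puts \<open>y\<close> into the common kernel of \<open>\<lambda>\<^sub>a, \<lambda>\<^sub>b\<close>, so \<open>y = 0\<close> and \<open>x = 0\<close>.\<close>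

lemma in_Rel_iff:
  assumes "a 0 = 0" and "b 0 = 0"
  shows "in_Rel a b \<longleftrightarrow> (\<forall>x. a x = 0 \<and> b x = 0 \<longrightarrow> x = 0)"
  using assms unfolding in_Rel_def by auto

lemma in_Rel_middle:
  fixes la lb :: "'lt::zero \<Rightarrow> 'lh::zero" and ma mb :: "'mt::zero \<Rightarrow> 'mh::zero"
    and na nb :: "'nt::zero \<Rightarrow> 'nh::zero"
    and ft :: "'lt \<Rightarrow> 'mt" and fh :: "'lh \<Rightarrow> 'mh" and gt :: "'mt \<Rightarrow> 'nt" and gh :: "'mh \<Rightarrow> 'nh"
  assumes zero: "ma 0 = 0" "mb 0 = 0" "ft 0 = 0" "fh 0 = 0" "gh 0 = 0"
    and f_comm: "fh \<circ> la = ma \<circ> ft" "fh \<circ> lb = mb \<circ> ft"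
    and g_comm: "gh \<circ> ma = na \<circ> gt" "gh \<circ> mb = nb \<circ> gt"
    and exact: "{x. gt x = 0} \<subseteq> range ft"
    and "inj fh"
    and L: "in_Rel la lb" and N: "in_Rel na nb"
  shows "in_Rel ma mb"
proof -
  have "x = 0" if xa: "ma x = 0" and xb: "mb x = 0" for x
  proof -
    have "na (gt x) = 0" "nb (gt x) = 0"
      using g_comm[THEN fun_cong, of x] xa xb zero by simp_all
    with N have "gt x = 0"
      unfolding in_Rel_def by blast
    with exact obtain y where y: "x = ft y"
      by blast
    have "fh (la y) = fh 0" "fh (lb y) = fh 0"
      using f_comm[THEN fun_cong, of y] xa xb y zero by simp_all
    with \<open>inj fh\<close> have "la y = 0" "lb y = 0"
      by (simp_all add: inj_eq)
    with L have "y = 0"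
      unfolding in_Rel_def by blast
    with y zero show "x = 0"
      by simp
  qed
  with zero show ?thesis
    by (simp add: in_Rel_iff)
qed

theorem lemma3p4:
  fixes sLt :: "'r::comm_ring_1 \<Rightarrow> 'lt::ab_group_add \<Rightarrow> 'lt"
    and sLh :: "'r \<Rightarrow> 'lh::ab_group_add \<Rightarrow> 'lh"
    and sMt :: "'r \<Rightarrow> 'mt::ab_group_add \<Rightarrow> 'mt"
    and sMh :: "'r \<Rightarrow> 'mh::ab_group_add \<Rightarrow> 'mh"
    and sNt :: "'r \<Rightarrow> 'nt::ab_group_add \<Rightarrow> 'nt"
    and sNh :: "'r \<Rightarrow> 'nh::ab_group_add \<Rightarrow> 'nh"
    and la lb :: "'lt \<Rightarrow> 'lh" and ma mb :: "'mt \<Rightarrow> 'mh" and na nb :: "'nt \<Rightarrow> 'nh"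
    and ft :: "'lt \<Rightarrow> 'mt" and fh :: "'lh \<Rightarrow> 'mh"
    and gt :: "'mt \<Rightarrow> 'nt" and gh :: "'mh \<Rightarrow> 'nh"
  assumes "rep_obj sLt sLh la lb"
    and "rep_obj sMt sMh ma mb"
    and "rep_obj sNt sNh na nb"
    and "rep_mor sLt sLh la lb sMt sMh ma mb ft fh"
    and "rep_mor sMt sMh ma mb sNt sNh na nb gt gh"
    and "gt \<circ> ft = (\<lambda>_. 0)" and "gh \<circ> fh = (\<lambda>_. 0)"
    and "exact_at ft gt" and "exact_at fh gh"
    and "inj fh"
    and "in_Rel la lb" and "in_Rel na nb"
  shows "in_Rel ma mb"
proof -
  have M: "module_hom sMt sMh ma" "module_hom sMt sMh mb"
    using assms(2) by (simp_all add: rep_obj_def)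
  have f: "module_hom sLt sMt ft" "module_hom sLh sMh fh"
      "fh \<circ> la = ma \<circ> ft" "fh \<circ> lb = mb \<circ> ft"
    using assms(4) by (simp_all add: rep_mor_def)
  have g: "module_hom sMh sNh gh" "gh \<circ> ma = na \<circ> gt" "gh \<circ> mb = nb \<circ> gt"
    using assms(5) by (simp_all add: rep_mor_def)
  have "{x. gt x = 0} \<subseteq> range ft"
    using assms(8) by (simp add: exact_at_def)
  moreover have "ma 0 = 0" "mb 0 = 0" "ft 0 = 0" "fh 0 = 0" "gh 0 = 0"
    using M f g by (simp_all add: module_hom.zero)
  ultimately show ?thesis
    using f(3,4) g(2,3) assms(10-12) by (intro in_Rel_middle[of ma mb ft fh gh])
qed

end
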